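(* Let $p,q\ge 1$ be integers with $p\neq q$ such that $q(2q-p-1)/(q-p)$ is a positive integer. Then the mixed extension of $P_3$ of type $\big(p,\,-q,\,q(2q-p-1)/(q-p)\big)$ and the mixed extension of $P_3$ of type $\big(-q,\,2q-1,\,p(2q-p-1)/(q-p)\big)$ are cospectral (have the same adjacency spectrum).
   Context: Let $P_3$ be the path with vertices $1,2,3$ and edges $\{1,2\},\{2,3\}$. For nonzero integers $t_1,t_2,t_3$, the mixed extension of $P_3$ of type $(t_1,t_2,t_3)$ is the graph whose vertex set is a disjoint union $V_1\cup V_2\cup V_3$ with $|V_i|=|t_i|$, where $V_i$ is a clique if $t_i>0$ and a coclique (independent set) if $t_i<0$, every vertex of $V_2$ is adjacent to every vertex of $V_1\cup V_3$, and there are no edges between $V_1$ and $V_3$. Two graphs are cospectral if their adjacency matrices have the same characteristic polynomial. *)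

theory Defs
  imports "Jordan_Normal_Form.Char_Poly"
begin

text \<open>Mixed extension of the path P_3 (vertices 1,2,3, edges {1,2},{2,3}) of type (t1,t2,t3).
 Vertices are 0..<|t1|+|t2|+|t3|; the first |t1| form V_1, the next |t2| form V_2, the rest V_3.\<close>

definition mx_block :: "int \<Rightarrow> int \<Rightarrow> int \<Rightarrow> nat \<Rightarrow> nat" where
  "mx_block t1 t2 t3 v =
     (if v < nat \<bar>t1\<bar> then 1 else if v < nat \<bar>t1\<bar> + nat \<bar>t2\<bar> then 2 else 3)"

definition mx_type :: "int \<Rightarrow> int \<Rightarrow> int \<Rightarrow> nat \<Rightarrow> int" where
  "mx_type t1 t2 t3 b = (if b = 1 then t1 else if b = 2 then t2 else t3)"

definition P3_edge :: "nat \<Rightarrow> nat \<Rightarrow> bool" where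
  "P3_edge a b \<longleftrightarrow> {a, b} = {1, 2} \<or> {a, b} = {2, 3}"

definition mx_adj :: "int \<Rightarrow> int \<Rightarrow> int \<Rightarrow> nat \<Rightarrow> nat \<Rightarrow> bool" where
  "mx_adj t1 t2 t3 u v \<longleftrightarrow> u \<noteq> v \<and>
     (let bu = mx_block t1 t2 t3 u; bv = mx_block t1 t2 t3 v in
       (bu = bv \<and> mx_type t1 t2 t3 bu > 0) \<or> P3_edge bu bv)"

definition mixed_ext_P3_adj :: "int \<Rightarrow> int \<Rightarrow> int \<Rightarrow> int mat" where
  "mixed_ext_P3_adj t1 t2 t3 =
     (let n = nat \<bar>t1\<bar> + nat \<bar>t2\<bar> + nat \<bar>t3\<bar> in
      mat n n (\<lambda>(u, v). if mx_adj t1 t2 t3 u v then 1 else 0))"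

definition cospectral :: "int mat \<Rightarrow> int mat \<Rightarrow> bool" where
  "cospectral A B \<longleftrightarrow> char_poly A = char_poly B"

end

theory Submission
  imports Defs
begin

text \<open>
  The partition of the vertices into \<open>V\<^sub>1, V\<^sub>2, V\<^sub>3\<close> is equitable. A vector supported on
  one block \<open>V\<^sub>i\<close> with coordinate sum zero is an eigenvector for \<open>-1\<close> (clique) or \<open>0\<close>
  (coclique), which accounts for \<open>|t\<^sub>i| - 1\<close> eigenvalues per block; the remaining three are
  the eigenvalues of the \<open>3 \<times> 3\<close> quotient matrix. We obtain this factorisation of the
  characteristic polynomial for an arbitrary blow-up of a weighted graph by evaluating at all
  but finitely many points, where \<open>det (1 + U V) = det (1 + V U)\<close> reduces the determinant to
  one of size \<open>3 \<times> 3\<close>. Writing \<open>r\<close> and \<open>s\<close> for the third entries of the two types, the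
  linear factors agree because \<open>p + r = (2q - 1) + s\<close>, and the characteristic polynomials of
  the two quotient matrices differ by \<open>(x + 2q) (q (2q - p - 1) - r (q - p)) = 0\<close>.
\<close>

lemma det_one_plus_mult_commute:
  fixes U :: "'a::idom mat"
  assumes U: "U \<in> carrier_mat n k" and V: "V \<in> carrier_mat k n"
  shows "det (1\<^sub>m n + U * V) = det (1\<^sub>m k + V * U)"
proof -
  define M where "M = four_block_mat (1\<^sub>m n) (-U) V (1\<^sub>m k)"
  define L where "L = four_block_mat (1\<^sub>m n) U (0\<^sub>m k n) (1\<^sub>m k)"
  have M: "M \<in> carrier_mat (n+k) (n+k)" and L: "L \<in> carrier_mat (n+k) (n+k)"
    unfolding M_def L_def using U V by auto
  have "det L = 1" unfolding L_def
    using det_four_block_mat_lower_left_zero[OF one_carrier_mat[of n] _ refl one_carrier_mat[of k], of U] U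
    by simp
  then have "det (L * M) = det (M * L)"
    using det_mult[OF L M] det_mult[OF M L] by simp
  moreover have "L * M = four_block_mat (1\<^sub>m n + U * V) (0\<^sub>m n k) V (1\<^sub>m k)"
    unfolding L_def M_def using U V by (subst mult_four_block_mat) auto
  moreover have "M * L = four_block_mat (1\<^sub>m n) (0\<^sub>m n k) V (1\<^sub>m k + V * U)"
    unfolding L_def M_def using U V by (subst mult_four_block_mat) auto
  ultimately show ?thesis
    using U V by (simp add: det_four_block_mat_upper_right_zero[where n=n and m=k])
qed

lemma det_mat_diag: "det (mat_diag n f) = (\<Prod>i<n. f i)"
  by (subst det_upper_triangular[of _ n]) (auto simp: mat_diag_def prod_list_diag_prod atLeast0LessThan)

lemma det_mat_2: "det (mat 2 2 f) = f (0, 0) * f (1, 1) - f (0, 1) * f (1, 0)"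
  by (subst laplace_expansion_row[of _ 2 0])
     (auto simp: eval_nat_numeral cofactor_def mat_delete_def insert_index_def det_single)

lemma det_mat_3:
  "det (mat 3 3 (\<lambda>(i, j). a i j)) =
     a 0 0 * (a 1 1 * a 2 2 - a 1 2 * a 2 1)
   - a 0 1 * (a 1 0 * a 2 2 - a 1 2 * a 2 0)
   + a 0 2 * (a 1 0 * a 2 1 - a 1 1 * a 2 0)"
  by (subst laplace_expansion_row[of _ 3 0])
     (auto simp: eval_nat_numeral cofactor_def mat_delete_def insert_index_def
        det_mat_2[unfolded numeral_2_eq_2] algebra_simps)

lemma det_diag_minus_blowup:
  fixes d :: "nat \<Rightarrow> 'a::field" and m :: "nat \<Rightarrow> nat \<Rightarrow> 'a"
  assumes blk: "\<And>u. u < n \<Longrightarrow> blk u < k" and d: "\<And>j. j < k \<Longrightarrow> d j \<noteq> 0"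
  defines "c j \<equiv> card {u. u < n \<and> blk u = j}"
  shows "det (mat n n (\<lambda>(u, v). (if u = v then d (blk u) else 0) - m (blk u) (blk v)))
         * (\<Prod>j<k. d j)
       = (\<Prod>j<k. d j ^ c j)
         * det (mat k k (\<lambda>(i, j). (if i = j then d i else 0) - m i j * of_nat (c j)))"
proof -
  text \<open>With \<open>P\<close> the \<open>n \<times> k\<close> block indicator matrix and \<open>\<Lambda> = diag (d \<circ> blk)\<close>, the left matrix
    is \<open>\<Lambda> (1 + W V)\<close> for \<open>W = \<Lambda>\<inverse> P\<close> and \<open>V = - M P\<^sup>T\<close>.\<close>
  define W where "W = mat n k (\<lambda>(u, j). if blk u = j then 1 / d j else 0)"
  define V where "V = mat k n (\<lambda>(i, v). - m i (blk v))"
  have W: "W \<in> carrier_mat n k" and V: "V \<in> carrier_mat k n"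
    unfolding W_def V_def by auto
  have WV: "(1\<^sub>m n + W * V) $$ (u, v) = (if u = v then 1 else 0) - m (blk u) (blk v) / d (blk u)"
    if "u < n" "v < n" for u v
    using that blk[OF \<open>u < n\<close>]
    by (simp add: W_def V_def scalar_prod_def atLeast0LessThan sum_negf
        if_distrib[of "\<lambda>x. x * _"] cong: if_cong)
  have VW: "(1\<^sub>m k + V * W) $$ (i, j) = (if i = j then 1 else 0) - m i j * of_nat (c j) / d j"
    if "i < k" "j < k" for i j
  proof -
    have "(V * W) $$ (i, j) = (\<Sum>u<n. if blk u = j then - m i j / d j else 0)"
      using that by (auto simp: W_def V_def scalar_prod_def atLeast0LessThan intro!: sum.cong)
    also have "\<dots> = (\<Sum>u\<in>{u \<in> {..<n}. blk u = j}. - m i j / d j)"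
      by (rule sum.inter_filter[symmetric]) simp
    finally show ?thesis
      using that V W by (simp add: c_def)
  qed
  have left: "mat n n (\<lambda>(u, v). (if u = v then d (blk u) else 0) - m (blk u) (blk v))
      = mat_diag n (\<lambda>u. d (blk u)) * (1\<^sub>m n + W * V)"
    using W V blk d
    by (subst mat_diag_mult_left[of _ n n]) (auto intro!: eq_matI simp: WV field_simps)
  have right: "mat k k (\<lambda>(i, j). (if i = j then d i else 0) - m i j * of_nat (c j))
      = (1\<^sub>m k + V * W) * mat_diag k d"
    using W V d
    by (subst mat_diag_mult_right[of _ k k]) (auto intro!: eq_matI simp: VW field_simps)
  have "(\<Prod>u<n. d (blk u)) = (\<Prod>j<k. \<Prod>u\<in>{u. u < n \<and> blk u = j}. d (blk u))"
    using blk by (subst prod.group[symmetric, where g = blk and T = "{..<k}"]) auto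
  also have "\<dots> = (\<Prod>j<k. d j ^ c j)"
    by (simp add: c_def)
  finally show ?thesis
    unfolding left right using W V
    by (simp add: det_mult[of _ n] det_mult[of _ k] det_mat_diag det_one_plus_mult_commute[OF W V])
qed

lemma poly_eqI_cofinite:
  fixes p q :: "'a::{idom, ring_char_0} poly"
  assumes "finite S" and "\<And>x. x \<notin> S \<Longrightarrow> poly p x = poly q x"
  shows "p = q"
proof (rule ccontr)
  assume "p \<noteq> q"
  then have "finite {x. poly (p - q) x = 0}"
    by (intro poly_roots_finite) simp
  moreover have "UNIV \<subseteq> S \<union> {x. poly (p - q) x = 0}"
    using assms(2) by auto
  ultimately show False
    using assms(1) infinite_UNIV_char_0 finite_subset by blast
qed

lemma poly_char_poly:
  assumes "A \<in> carrier_mat n n"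
  shows "poly (char_poly A) x = det (mat n n (\<lambda>(i, j). (if i = j then x else 0) - A $$ (i, j)))"
  unfolding char_poly_def
  by (rule poly_det_cong[of _ n]) (use assms in \<open>auto simp: char_poly_matrix_def\<close>)

lemma char_poly_blowup:
  fixes m :: "nat \<Rightarrow> nat \<Rightarrow> 'a::field_char_0" and blk :: "nat \<Rightarrow> nat" and n :: nat
  defines "c j \<equiv> card {u. u < n \<and> blk u = j}"
  assumes blk: "\<And>u. u < n \<Longrightarrow> blk u < k" and nonempty: "\<And>j. j < k \<Longrightarrow> c j > 0"
  shows "char_poly (mat n n (\<lambda>(u, v). if u = v then 0 else m (blk u) (blk v)))
       = (\<Prod>j<k. [:m j j, 1:] ^ (c j - 1))
         * char_poly (mat k k (\<lambda>(i, j). m i j * of_nat (c j) - (if i = j then m i i else 0)))"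
    (is "char_poly ?A = ?D * char_poly ?B")
proof (rule poly_eqI_cofinite)
  show "finite ((\<lambda>j. - m j j) ` {..<k})"
    by simp
  fix x
  assume "x \<notin> (\<lambda>j. - m j j) ` {..<k}"
  then have d: "x + m j j \<noteq> 0" if "j < k" for j
    using that by (auto simp: eq_neg_iff_add_eq_0[symmetric])
  have "mat n n (\<lambda>(u, v). (if u = v then x else 0) - ?A $$ (u, v))
      = mat n n (\<lambda>(u, v). (if u = v then x + m (blk u) (blk u) else 0) - m (blk u) (blk v))"
    by (rule eq_matI) auto
  then have "poly (char_poly ?A) x * (\<Prod>j<k. x + m j j)
      = det (mat n n (\<lambda>(u, v). (if u = v then x + m (blk u) (blk u) else 0) - m (blk u) (blk v)))
        * (\<Prod>j<k. x + m j j)"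
    by (simp add: poly_char_poly[of ?A n])
  also have "\<dots> = (\<Prod>j<k. (x + m j j) ^ c j)
      * det (mat k k (\<lambda>(i, j). (if i = j then x + m i i else 0) - m i j * of_nat (c j)))"
    unfolding c_def by (rule det_diag_minus_blowup[OF blk d])
  also have "mat k k (\<lambda>(i, j). (if i = j then x + m i i else 0) - m i j * of_nat (c j))
      = mat k k (\<lambda>(i, j). (if i = j then x else 0) - ?B $$ (i, j))"
    by (rule eq_matI) auto
  also have "det \<dots> = poly (char_poly ?B) x"
    by (simp add: poly_char_poly[of ?B k])
  also have "(\<Prod>j<k. (x + m j j) ^ c j) = (\<Prod>j<k. x + m j j) * poly ?D x"
  proof -
    have "(\<Prod>j<k. (x + m j j) ^ c j) = (\<Prod>j<k. (x + m j j) * (x + m j j) ^ (c j - 1))"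
      using nonempty by (intro prod.cong) (auto simp: power_eq_if less_not_refl2)
    then show ?thesis
      by (simp add: poly_prod prod.distrib add.commute)
  qed
  finally show "poly (char_poly ?A) x = poly (?D * char_poly ?B) x"
    using d by simp
qed

definition mx_weight :: "int \<Rightarrow> int \<Rightarrow> int \<Rightarrow> nat \<Rightarrow> nat \<Rightarrow> int" where
  "mx_weight t1 t2 t3 b c = (if (b = c \<and> mx_type t1 t2 t3 b > 0) \<or> P3_edge b c then 1 else 0)"

text \<open>Entry \<open>(i, j)\<close> counts the neighbours in \<open>V\<^bsub>j+1\<^esub>\<close> of a vertex of \<open>V\<^bsub>i+1\<^esub>\<close>.\<close>

definition mx_quotient :: "int \<Rightarrow> int \<Rightarrow> int \<Rightarrow> int mat" where
  "mx_quotient t1 t2 t3 = mat 3 3 (\<lambda>(i, j).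
     mx_weight t1 t2 t3 (i + 1) (j + 1) * \<bar>mx_type t1 t2 t3 (j + 1)\<bar>
     - (if i = j then mx_weight t1 t2 t3 (i + 1) (i + 1) else 0))"

lemma P3_edge_iff:
  "P3_edge a b \<longleftrightarrow> (a = 1 \<and> b = 2) \<or> (a = 2 \<and> b = 1) \<or> (a = 2 \<and> b = 3) \<or> (a = 3 \<and> b = 2)"
  unfolding P3_edge_def doubleton_eq_iff by auto

lemma mx_block_cases: "mx_block t1 t2 t3 u \<in> {1, 2, 3}"
  by (simp add: mx_block_def)

lemma card_mx_block:
  assumes "b \<in> {1, 2, 3}"
  shows "card {u. u < nat \<bar>t1\<bar> + nat \<bar>t2\<bar> + nat \<bar>t3\<bar> \<and> mx_block t1 t2 t3 u = b}
       = nat \<bar>mx_type t1 t2 t3 b\<bar>"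
proof -
  have "{u. u < nat \<bar>t1\<bar> + nat \<bar>t2\<bar> + nat \<bar>t3\<bar> \<and> mx_block t1 t2 t3 u = b}
      = (if b = 1 then {0..<nat \<bar>t1\<bar>} else if b = 2 then {nat \<bar>t1\<bar>..<nat \<bar>t1\<bar> + nat \<bar>t2\<bar>}
         else {nat \<bar>t1\<bar> + nat \<bar>t2\<bar>..<nat \<bar>t1\<bar> + nat \<bar>t2\<bar> + nat \<bar>t3\<bar>})"
    using assms by (auto simp: mx_block_def)
  then show ?thesis
    using assms by (auto simp: mx_type_def)
qed

lemma char_poly_mixed_ext_P3:
  assumes "t1 \<noteq> 0" and "t2 \<noteq> 0" and "t3 \<noteq> 0"
  shows "char_poly (mixed_ext_P3_adj t1 t2 t3)
       = [:if t1 > 0 then 1 else 0, 1:] ^ (nat \<bar>t1\<bar> - 1)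
       * [:if t2 > 0 then 1 else 0, 1:] ^ (nat \<bar>t2\<bar> - 1)
       * [:if t3 > 0 then 1 else 0, 1:] ^ (nat \<bar>t3\<bar> - 1)
       * char_poly (mx_quotient t1 t2 t3)"
    (is "char_poly ?A = ?rhs")
proof -
  define n where "n = nat \<bar>t1\<bar> + nat \<bar>t2\<bar> + nat \<bar>t3\<bar>"
  define blk where "blk u = mx_block t1 t2 t3 u - 1" for u
  define w where "w i j = (of_int (mx_weight t1 t2 t3 (i + 1) (j + 1)) :: real)" for i j
  have blk: "blk u < 3" for u
    using mx_block_cases[of t1 t2 t3 u] by (auto simp: blk_def)
  have blk_Suc: "Suc (blk u) = mx_block t1 t2 t3 u" for u
    using mx_block_cases[of t1 t2 t3 u] by (auto simp: blk_def)
  then have blk_eq: "blk u = j \<longleftrightarrow> mx_block t1 t2 t3 u = j + 1" for u j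
    by (metis Suc_eq_plus1 nat.inject)
  have card: "card {u. u < n \<and> blk u = j} = nat \<bar>mx_type t1 t2 t3 (j + 1)\<bar>" if "j < 3" for j
    using card_mx_block[of "j + 1"] that by (auto simp: blk_eq n_def less_Suc_eq numeral_3_eq_3)
  have A: "?A \<in> carrier_mat n n" and Q: "mx_quotient t1 t2 t3 \<in> carrier_mat 3 3"
    by (simp_all add: mixed_ext_P3_adj_def mx_quotient_def n_def Let_def)
  have nonempty: "card {u. u < n \<and> blk u = j} > 0" if "j < 3" for j
    using that assms by (auto simp: card mx_type_def less_Suc_eq numeral_3_eq_3)
  have "map_mat of_int ?A = mat n n (\<lambda>(u, v). if u = v then 0 else w (blk u) (blk v))"
    by (intro eq_matI)
       (auto simp: mixed_ext_P3_adj_def mx_adj_def mx_weight_def w_def blk_Suc n_def Let_def)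
  moreover have "map_mat of_int (mx_quotient t1 t2 t3)
      = mat 3 3 (\<lambda>(i, j). w i j * of_nat (card {u. u < n \<and> blk u = j}) - (if i = j then w i i else 0))"
    by (intro eq_matI) (auto simp: mx_quotient_def card w_def)
  ultimately have "char_poly (map_mat real_of_int ?A)
      = (\<Prod>j<3. [:w j j, 1:] ^ (card {u. u < n \<and> blk u = j} - 1))
        * char_poly (map_mat of_int (mx_quotient t1 t2 t3))"
    using char_poly_blowup[of n blk 3 w] blk nonempty by simp
  then have "map_poly real_of_int (char_poly ?A) = map_poly real_of_int ?rhs"
    using A Q
    by (simp add: of_int_hom.char_poly_hom card hom_distribs w_def mx_weight_def mx_type_def
        P3_edge_def numeral_3_eq_3 lessThan_Suc)
  then show ?thesis
    by simp
qed

lemma mixed_type_relations: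
  fixes p q :: int
  assumes "p \<ge> 1" and "q \<ge> 1" and "p \<noteq> q"
    and "(q - p) dvd (q * (2*q - p - 1))"
    and "q * (2*q - p - 1) div (q - p) > 0"
  defines "r \<equiv> q * (2*q - p - 1) div (q - p)" and "s \<equiv> p * (2*q - p - 1) div (q - p)"
  shows "r * (q - p) = q * (2*q - p - 1)" and "s = r - (2*q - p - 1)" and "s > 0"
proof -
  show r: "r * (q - p) = q * (2*q - p - 1)"
    using assms(4) by (simp add: r_def)
  have ps: "p * (2*q - p - 1) = (r - (2*q - p - 1)) * (q - p)"
    using r by (simp add: algebra_simps)
  then show s: "s = r - (2*q - p - 1)"
    using assms(3) by (simp add: s_def)
  have "0 < r * ((q - p) * (q - p))"
    using assms(3,5) by (auto simp: r_def zero_less_mult_iff)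
  then have "0 < q * ((2*q - p - 1) * (q - p))"
    using r by (metis mult.assoc)
  then have "0 < p * ((2*q - p - 1) * (q - p))"
    using assms(1,2) by (simp add: zero_less_mult_iff)
  also have "\<dots> = s * ((q - p) * (q - p))"
    unfolding s by (metis ps mult.assoc)
  finally show "s > 0"
    by (simp add: zero_less_mult_iff)
qed

lemma char_poly_mx_quotient_eq:
  fixes p q r s :: int
  assumes "p > 0" and "q > 0" and "r > 0" and "s > 0"
    and "r * (q - p) = q * (2*q - p - 1)" and "s = r - (2*q - p - 1)"
  shows "char_poly (mx_quotient p (-q) r) = char_poly (mx_quotient (-q) (2*q - 1) s)"
proof (rule poly_eq_poly_eq_iff[THEN iffD1, OF ext])
  fix x
  have "poly (char_poly (mx_quotient p (-q) r)) x
      = (x - p + 1) * (x * (x - r + 1) - q * r) - p * q * (x - r + 1)"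
    using assms(1-3)
    by (simp add: poly_char_poly[of _ 3] det_mat_3 mx_quotient_def mx_weight_def mx_type_def
        P3_edge_iff algebra_simps)
  also have "\<dots> = x * ((x - 2*q + 2) * (x - s + 1) - s * (2*q - 1)) - q * (2*q - 1) * (x - s + 1)
      + (x + 2*q) * (q * (2*q - p - 1) - r * (q - p))"
    unfolding assms(6) by (simp add: algebra_simps)
  also have "\<dots> = poly (char_poly (mx_quotient (-q) (2*q - 1) s)) x"
    using assms(2,4,5)
    by (simp add: poly_char_poly[of _ 3] det_mat_3 mx_quotient_def mx_weight_def mx_type_def
        P3_edge_iff algebra_simps)
  finally show "poly (char_poly (mx_quotient p (-q) r)) x
      = poly (char_poly (mx_quotient (-q) (2*q - 1) s)) x" .
qed

theorem proposition4:
  fixes p q :: int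
  assumes "p \<ge> 1" and "q \<ge> 1" and "p \<noteq> q"
    and "(q - p) dvd (q * (2*q - p - 1))"
    and "q * (2*q - p - 1) div (q - p) > 0"
  shows "cospectral
           (mixed_ext_P3_adj p (-q) (q * (2*q - p - 1) div (q - p)))
           (mixed_ext_P3_adj (-q) (2*q - 1) (p * (2*q - p - 1) div (q - p)))"
proof -
  define r where "r = q * (2*q - p - 1) div (q - p)"
  define s where "s = p * (2*q - p - 1) div (q - p)"
  have r: "r * (q - p) = q * (2*q - p - 1)" and s: "s = r - (2*q - p - 1)" and "s > 0"
    using mixed_type_relations[OF assms] by (simp_all add: r_def s_def)
  have "r > 0"
    using assms(5) by (simp add: r_def)
  have "char_poly (mx_quotient p (-q) r) = char_poly (mx_quotient (-q) (2*q - 1) s)"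
    using char_poly_mx_quotient_eq[OF _ _ \<open>r > 0\<close> \<open>s > 0\<close> r s] assms(1,2) by simp
  moreover have "(nat p - 1) + (nat r - 1) = (nat (2*q - 1) - 1) + (nat s - 1)"
    using s assms(1,2) \<open>r > 0\<close> \<open>s > 0\<close> by linarith
  ultimately have "[:1, 1:] ^ ((nat p - 1) + (nat r - 1)) * [:0, 1:] ^ (nat q - 1)
        * char_poly (mx_quotient p (-q) r)
      = [:1, 1:] ^ ((nat (2*q - 1) - 1) + (nat s - 1)) * [:0, 1:] ^ (nat q - 1)
        * char_poly (mx_quotient (-q) (2*q - 1) s)"
    by simp
  then show ?thesis
    unfolding cospectral_def r_def[symmetric] s_def[symmetric] power_add
    using assms(1,2) \<open>r > 0\<close> \<open>s > 0\<close> by (simp add: char_poly_mixed_ext_P3 mult_ac)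
qed

end
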